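(* Assume, in the setting described in the context, the saturation assumption: there is a fixed $b_0\in(0,1)$ and a number $b_h<b_0$ such that $$|J(u)-J(u_h^{(2)})| < b_h\,|J(u)-J(\tilde u)|.$$ Then the computable error estimator $\eta^{(2)}$ satisfies $$\underline{c}_h|\eta^{(2)}| \le |J(u)-J(\tilde u)| \le \overline{c}_h|\eta^{(2)}| \quad\text{and}\quad \underline{c}|\eta^{(2)}| \le |J(u)-J(\tilde u)| \le \overline{c}|\eta^{(2)}|,$$ with the positive constants $\underline{c}_h:=1/(1+b_h)$, $\overline{c}_h:=1/(1-b_h)$, $\underline{c}:=1/(1+b_0)$, $\overline{c}:=1/(1-b_0)$.
   Context: Let $U$ and $V$ be real Banach spaces with dual $V^*$. Let $\mathcal{A}:U\to V^*$ be a (nonlinear) operator that is three times continuously Fréchet differentiable, and let $J:U\to\mathbb{R}$ be three times continuously Fréchet differentiable. Notation: $\mathcal{A}(w)(v)$ is the value of $\mathcal{A}(w)\in V^*$ at $v\in V$. For fixed $v$, $\mathcal{A}'(w)(\varphi,v)$, $\mathcal{A}''(w)(\varphi,\psi,v)$ and $\mathcal{A}'''(w)(\varphi,\psi,\chi,v)$ denote the first, second and third Fréchet derivatives of $w\mapsto\mathcal{A}(w)(v)$ at $w$ in the directions $\varphi,\psi,\chi\in U$. Analogously, $J'(w)(\varphi)$ and $J'''(w)(\varphi,\psi,\chi)$ denote derivatives of $J$. Let $u\in U$ satisfy $\mathcal{A}(u)(v)=0$ for all $v\in V$, and let $z\in V$ satisfy $\mathcal{A}'(u)(\varphi,z)=J'(u)(\varphi)$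 for all $\varphi\in U$. Let $U_h^{(2)}\subset U$ and $V_h^{(2)}\subset V$ be finite-dimensional subspaces (enriched spaces). Let $u_h^{(2)}\in U_h^{(2)}$ satisfy $\mathcal{A}(u_h^{(2)})(v)=0$ for all $v\in V_h^{(2)}$. Let $z_h^{(2)}\in V_h^{(2)}$ satisfy $\mathcal{A}'(u_h^{(2)})(\varphi,z_h^{(2)})=J'(u_h^{(2)})(\varphi)$ for all $\varphi\in U_h^{(2)}$. Let $\tilde u\in U_h^{(2)}$ and $\tilde z\in V_h^{(2)}$ be arbitrary fixed elements. Define $\rho(\tilde u)(v):=-\mathcal{A}(\tilde u)(v)$ and $\rho^*(\tilde u,\tilde z)(\varphi):=J'(\tilde u)(\varphi)-\mathcal{A}'(\tilde u)(\varphi,\tilde z)$. With $e^{(2)}:=u_h^{(2)}-\tilde u$ and $e^{(2),*}:=z_h^{(2)}-\tilde z$, define $$\mathcal{R}^{(3)(2)}:=\frac12\int_0^1\Big[J'''(\tilde u+se^{(2)})(e^{(2)},e^{(2)},e^{(2)})-\mathcal{A}'''(\tilde u+se^{(2)})(e^{(2)},e^{(2)},e^{(2)},\tilde z+se^{(2),*})-3\mathcal{A}''(\tilde u+se^{(2)})(e^{(2)},e^{(2)},e^{(2),*})\Big]s(s-1)\,ds,$$ and the computable error estimator $$\eta^{(2)}:=\tfrac12\rho(\tilde u)(z_h^{(2)}-\tilde z)+\tfrac12\rho^*(\tilde u,\tilde z)(u_h^{(2)}-\tilde u)+\rho(\tilde u)(\tilde z)+\mathcal{R}^{(3)(2)}.$$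 *)

theory Defs
  imports "HOL-Analysis.Analysis"
begin

(* V* is modelled as 'v =>L real (bounded linear functionals). Frechet derivatives
   are iterated bounded linear maps: A1 w phi v = A'(w)(phi,v), A2 w phi psi v = A''(w)(phi,psi,v),
   A3 w phi psi chi v = A'''(w)(phi,psi,chi,v); similarly J1, J2, J3 for J. *)

definition fin_dim_subspace :: "'a::real_vector set \<Rightarrow> bool" where
  "fin_dim_subspace S \<longleftrightarrow> subspace S \<and> (\<exists>B. finite B \<and> S = span B)"

definition rho :: "('u \<Rightarrow> ('v::real_normed_vector \<Rightarrow>\<^sub>L real)) \<Rightarrow> 'u \<Rightarrow> 'v \<Rightarrow> real" where
  "rho A ut v = - blinfun_apply (A ut) v"

definition rho_star ::
  "('u::real_normed_vector \<Rightarrow> ('u \<Rightarrow>\<^sub>L real)) \<Rightarrow> ('u \<Rightarrow> ('u \<Rightarrow>\<^sub>L ('v::real_normed_vector \<Rightarrow>\<^sub>L real))) \<Rightarrow> 'u \<Rightarrow> 'v \<Rightarrow> 'u \<Rightarrow> real" where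
  "rho_star J1 A1 ut zt phi = blinfun_apply (J1 ut) phi - blinfun_apply (blinfun_apply (A1 ut) phi) zt"

definition R32 ::
  "('u::real_normed_vector \<Rightarrow> ('u \<Rightarrow>\<^sub>L ('u \<Rightarrow>\<^sub>L ('u \<Rightarrow>\<^sub>L real)))) \<Rightarrow>
   ('u \<Rightarrow> ('u \<Rightarrow>\<^sub>L ('u \<Rightarrow>\<^sub>L ('v::real_normed_vector \<Rightarrow>\<^sub>L real)))) \<Rightarrow>
   ('u \<Rightarrow> ('u \<Rightarrow>\<^sub>L ('u \<Rightarrow>\<^sub>L ('u \<Rightarrow>\<^sub>L ('v \<Rightarrow>\<^sub>L real))))) \<Rightarrow>
   'u \<Rightarrow> 'v \<Rightarrow> 'u \<Rightarrow> 'v \<Rightarrow> real" where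
  "R32 J3 A2 A3 ut zt uh zh =
    (let e = uh - ut; es = zh - zt in
     (1/2) * integral {0..1} (\<lambda>s::real.
        (blinfun_apply (blinfun_apply (blinfun_apply (J3 (ut + s *\<^sub>R e)) e) e) e
         - blinfun_apply (blinfun_apply (blinfun_apply (blinfun_apply (A3 (ut + s *\<^sub>R e)) e) e) e) (zt + s *\<^sub>R es)
         - 3 * blinfun_apply (blinfun_apply (blinfun_apply (A2 (ut + s *\<^sub>R e)) e) e) es)
        * (s * (s - 1))))"

definition eta2 where
  "eta2 A A1 A2 A3 J1 J3 ut zt uh zh =
     (1/2) * rho A ut (zh - zt) + (1/2) * rho_star J1 A1 ut zt (uh - ut)
     + rho A ut zt + R32 J3 A2 A3 ut zt uh zh"

end

theory Submission
  imports Defs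
begin

(* With the Lagrangian L(w, y) = J w - A(w)(y) and the errors eu = uh - ut, ez = zh - zt,
   the function f(s) = L(ut + s eu, zt + s ez) satisfies the trapezoidal rule with cubic
   remainder  f(1) - f(0) = (f'(0) + f'(1))/2 + 1/2 \<integral> f'''(s) s (s - 1) ds  over [0, 1],
   and f''' is exactly the integrand of R32. The Galerkin conditions give f'(1) = 0 and
   f(1) = J(uh), while f(0) = J(ut) + \<rho>(ut)(zt) and f'(0) = \<rho>(ut)(ez) + \<rho>^*(ut, zt)(eu).
   Hence \<eta> = J(uh) - J(ut) exactly, and the two-sided bounds follow from the saturation
   assumption by the triangle inequality. The integral being Henstock-Kurzweil, the
   fundamental theorem of calculus needs no continuity of the third derivatives; the exact
   solutions u, z enter only through the saturation assumption. *)

definition lagrangian :: "('u \<Rightarrow> real) \<Rightarrow> ('u \<Rightarrow> ('v::real_normed_vector \<Rightarrow>\<^sub>L real)) \<Rightarrow> 'u \<Rightarrow> 'v \<Rightarrow> real"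
  where "lagrangian J A w y = J w - blinfun_apply (A w) y"

definition lagrangian_deriv ::
  "('u::real_normed_vector \<Rightarrow> ('u \<Rightarrow>\<^sub>L real)) \<Rightarrow> ('u \<Rightarrow> ('v::real_normed_vector \<Rightarrow>\<^sub>L real)) \<Rightarrow>
   ('u \<Rightarrow> ('u \<Rightarrow>\<^sub>L ('v \<Rightarrow>\<^sub>L real))) \<Rightarrow> 'u \<Rightarrow> 'v \<Rightarrow> 'u \<Rightarrow> 'v \<Rightarrow> real"
  where "lagrangian_deriv J1 A A1 w y e es =
    blinfun_apply (J1 w) e - blinfun_apply (A w) es - blinfun_apply (blinfun_apply (A1 w) e) y"

lemma has_vector_derivative_along_line:
  fixes F :: "'a::real_normed_vector \<Rightarrow> 'b::real_normed_vector"
  assumes "\<And>w. (F has_derivative blinfun_apply (F' w)) (at w)"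
  shows "((\<lambda>s. F (a + s *\<^sub>R e)) has_vector_derivative blinfun_apply (F' (a + s *\<^sub>R e)) e) (at s)"
proof -
  have "((\<lambda>s. a + s *\<^sub>R e) has_derivative (\<lambda>h. h *\<^sub>R e)) (at s)"
    by (auto intro!: derivative_eq_intros)
  from diff_chain_at[OF this assms] show ?thesis
    unfolding has_vector_derivative_def by (simp add: o_def blinfun.scaleR_right)
qed

lemma trapezoidal_rule_remainder:
  fixes f f1 f2 f3 :: "real \<Rightarrow> real"
  assumes "\<And>s. s \<in> {0..1} \<Longrightarrow> (f has_real_derivative f1 s) (at s within {0..1})"
    and "\<And>s. s \<in> {0..1} \<Longrightarrow> (f1 has_real_derivative f2 s) (at s within {0..1})"
    and "\<And>s. s \<in> {0..1} \<Longrightarrow> (f2 has_real_derivative f3 s) (at s within {0..1})"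
  shows "f 1 - f 0 = (f1 0 + f1 1) / 2 + (1/2) * integral {0..1} (\<lambda>s. f3 s * (s * (s - 1)))"
proof -
  define H where "H s = 2 * f s - f1 s * (2 * s - 1) + f2 s * (s * (s - 1))" for s
  have "(H has_vector_derivative f3 s * (s * (s - 1))) (at s within {0..1})" if "s \<in> {0..1}" for s
  proof -
    have "(H has_real_derivative 2 * f1 s - (f2 s * (2 * s - 1) + f1 s * 2)
        + (f3 s * (s * (s - 1)) + f2 s * (2 * s - 1))) (at s within {0..1})"
      unfolding H_def using assms that by (auto intro!: derivative_eq_intros)
    then show ?thesis
      by (simp add: has_real_derivative_iff_has_vector_derivative algebra_simps)
  qed
  then have "((\<lambda>s. f3 s * (s * (s - 1))) has_integral H 1 - H 0) {0..1}"
    by (intro fundamental_theorem_of_calculus) auto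
  then have "integral {0..1} (\<lambda>s. f3 s * (s * (s - 1))) = H 1 - H 0"
    by (rule integral_unique)
  then show ?thesis
    by (simp add: H_def field_simps)
qed

lemma lagrangian_trapezoidal_identity:
  fixes A :: "'u::real_normed_vector \<Rightarrow> ('v::real_normed_vector \<Rightarrow>\<^sub>L real)"
  assumes dA: "\<And>w. (A has_derivative blinfun_apply (A1 w)) (at w)"
    and dA1: "\<And>w. (A1 has_derivative blinfun_apply (A2 w)) (at w)"
    and dA2: "\<And>w. (A2 has_derivative blinfun_apply (A3 w)) (at w)"
    and dJ: "\<And>w. (J has_derivative blinfun_apply (J1 w)) (at w)"
    and dJ1: "\<And>w. (J1 has_derivative blinfun_apply (J2 w)) (at w)"
    and dJ2: "\<And>w. (J2 has_derivative blinfun_apply (J3 w)) (at w)"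
  shows "lagrangian J A uh zh - lagrangian J A ut zt =
    (lagrangian_deriv J1 A A1 ut zt (uh - ut) (zh - zt)
      + lagrangian_deriv J1 A A1 uh zh (uh - ut) (zh - zt)) / 2
    + R32 J3 A2 A3 ut zt uh zh"
proof -
  define e where "e = uh - ut"
  define es where "es = zh - zt"
  define x where "x s = ut + s *\<^sub>R e" for s :: real
  define y where "y s = zt + s *\<^sub>R es" for s :: real
  define f where "f s = lagrangian J A (x s) (y s)" for s
  define f1 where "f1 s = lagrangian_deriv J1 A A1 (x s) (y s) e es" for s
  define f2 where "f2 s = blinfun_apply (blinfun_apply (J2 (x s)) e) e
      - 2 * blinfun_apply (blinfun_apply (A1 (x s)) e) es
      - blinfun_apply (blinfun_apply (blinfun_apply (A2 (x s)) e) e) (y s)" for s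
  define f3 where "f3 s = blinfun_apply (blinfun_apply (blinfun_apply (J3 (x s)) e) e) e
      - blinfun_apply (blinfun_apply (blinfun_apply (blinfun_apply (A3 (x s)) e) e) e) (y s)
      - 3 * blinfun_apply (blinfun_apply (blinfun_apply (A2 (x s)) e) e) es" for s
  note along = has_vector_derivative_along_line[of _ _ ut e, folded x_def]
  have dy: "(y has_vector_derivative es) (at s)" for s
    unfolding y_def by (auto intro!: derivative_eq_intros)
  have "(f has_vector_derivative f1 s) (at s)" for s
    unfolding f_def lagrangian_def
    by (rule has_vector_derivative_eq_rhs,
        (rule has_vector_derivative_diff blinfun.has_vector_derivative dy along dJ dA)+)
       (simp add: f1_def lagrangian_deriv_def algebra_simps)
  moreover have "(f1 has_vector_derivative f2 s) (at s)" for s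
    unfolding f1_def lagrangian_deriv_def
    by (rule has_vector_derivative_eq_rhs,
        (rule has_vector_derivative_diff blinfun.has_vector_derivative dy along dJ1 dA dA1
          has_vector_derivative_const)+)
       (simp add: f2_def algebra_simps)
  moreover have "(f2 has_vector_derivative f3 s) (at s)" for s
    unfolding f2_def
    by (rule has_vector_derivative_eq_rhs,
        (rule has_vector_derivative_diff has_vector_derivative_mult_right
          blinfun.has_vector_derivative dy along dJ2 dA1 dA2 has_vector_derivative_const)+)
       (simp add: f3_def algebra_simps)
  ultimately have
    "f 1 - f 0 = (f1 0 + f1 1) / 2 + (1/2) * integral {0..1} (\<lambda>s. f3 s * (s * (s - 1)))"
    by (intro trapezoidal_rule_remainder)
       (auto simp: has_real_derivative_iff_has_vector_derivative
         intro: has_vector_derivative_at_within)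
  then show ?thesis
    by (simp add: f_def f1_def f3_def x_def y_def e_def es_def R32_def Let_def)
qed

lemma eta2_eq_functional_difference:
  fixes A :: "'u::real_normed_vector \<Rightarrow> ('v::real_normed_vector \<Rightarrow>\<^sub>L real)"
  assumes dA: "\<And>w. (A has_derivative blinfun_apply (A1 w)) (at w)"
    and dA1: "\<And>w. (A1 has_derivative blinfun_apply (A2 w)) (at w)"
    and dA2: "\<And>w. (A2 has_derivative blinfun_apply (A3 w)) (at w)"
    and dJ: "\<And>w. (J has_derivative blinfun_apply (J1 w)) (at w)"
    and dJ1: "\<And>w. (J1 has_derivative blinfun_apply (J2 w)) (at w)"
    and dJ2: "\<And>w. (J2 has_derivative blinfun_apply (J3 w)) (at w)"
    and Uh: "subspace Uh" and Vh: "subspace Vh"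
    and "uh \<in> Uh" "ut \<in> Uh" and zh: "zh \<in> Vh" and "zt \<in> Vh"
    and primal_h: "\<And>v. v \<in> Vh \<Longrightarrow> blinfun_apply (A uh) v = 0"
    and adjoint_h: "\<And>\<phi>. \<phi> \<in> Uh \<Longrightarrow>
        blinfun_apply (blinfun_apply (A1 uh) \<phi>) zh = blinfun_apply (J1 uh) \<phi>"
  shows "eta2 A A1 A2 A3 J1 J3 ut zt uh zh = J uh - J ut"
proof -
  have "uh - ut \<in> Uh" "zh - zt \<in> Vh"
    using Uh Vh \<open>uh \<in> Uh\<close> \<open>ut \<in> Uh\<close> zh \<open>zt \<in> Vh\<close>
    by (simp_all add: subspace_diff)
  then have "lagrangian_deriv J1 A A1 uh zh (uh - ut) (zh - zt) = 0"
    using primal_h adjoint_h by (simp add: lagrangian_deriv_def)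
  moreover have "lagrangian J A uh zh = J uh"
    using primal_h zh by (simp add: lagrangian_def)
  ultimately show ?thesis
    using lagrangian_trapezoidal_identity[OF dA dA1 dA2 dJ dJ1 dJ2, of uh zh ut zt]
    by (simp add: eta2_def lagrangian_def lagrangian_deriv_def rho_def rho_star_def field_simps)
qed

lemma two_sided_bounds_from_saturation:
  fixes E d b :: real
  assumes sat: "\<bar>d\<bar> < b * \<bar>E\<bar>" and "b < 1"
  shows "(1 / (1 + b)) * \<bar>E - d\<bar> \<le> \<bar>E\<bar> \<and> \<bar>E\<bar> \<le> (1 / (1 - b)) * \<bar>E - d\<bar>"
proof -
  have "0 < b"
    using sat by (metis abs_ge_zero le_less_trans mult_le_0_iff not_le)
  moreover have "\<bar>E - d\<bar> \<le> (1 + b) * \<bar>E\<bar>" "(1 - b) * \<bar>E\<bar> \<le> \<bar>E - d\<bar>"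
    using sat by (auto simp: algebra_simps)
  ultimately show ?thesis
    using \<open>b < 1\<close> by (auto simp: field_simps)
qed

theorem mainTheorem1:
  fixes A :: "'u::banach \<Rightarrow> ('v::banach \<Rightarrow>\<^sub>L real)"
    and A1 :: "'u \<Rightarrow> ('u \<Rightarrow>\<^sub>L ('v \<Rightarrow>\<^sub>L real))"
    and A2 :: "'u \<Rightarrow> ('u \<Rightarrow>\<^sub>L ('u \<Rightarrow>\<^sub>L ('v \<Rightarrow>\<^sub>L real)))"
    and A3 :: "'u \<Rightarrow> ('u \<Rightarrow>\<^sub>L ('u \<Rightarrow>\<^sub>L ('u \<Rightarrow>\<^sub>L ('v \<Rightarrow>\<^sub>L real))))"
    and J :: "'u \<Rightarrow> real"
    and J1 :: "'u \<Rightarrow> ('u \<Rightarrow>\<^sub>L real)"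
    and J2 :: "'u \<Rightarrow> ('u \<Rightarrow>\<^sub>L ('u \<Rightarrow>\<^sub>L real))"
    and J3 :: "'u \<Rightarrow> ('u \<Rightarrow>\<^sub>L ('u \<Rightarrow>\<^sub>L ('u \<Rightarrow>\<^sub>L real)))"
    and u ut uh :: 'u and z zt zh :: 'v
    and Uh :: "'u set" and Vh :: "'v set"
    and b0 bh :: real
  assumes dA: "\<And>w. (A has_derivative blinfun_apply (A1 w)) (at w)"
    and dA1: "\<And>w. (A1 has_derivative blinfun_apply (A2 w)) (at w)"
    and dA2: "\<And>w. (A2 has_derivative blinfun_apply (A3 w)) (at w)"
    and cA3: "continuous_on UNIV A3"
    and dJ: "\<And>w. (J has_derivative blinfun_apply (J1 w)) (at w)"
    and dJ1: "\<And>w. (J1 has_derivative blinfun_apply (J2 w)) (at w)"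
    and dJ2: "\<And>w. (J2 has_derivative blinfun_apply (J3 w)) (at w)"
    and cJ3: "continuous_on UNIV J3"
    and primal: "\<And>v. blinfun_apply (A u) v = 0"
    and adjoint: "\<And>\<phi>. blinfun_apply (blinfun_apply (A1 u) \<phi>) z = blinfun_apply (J1 u) \<phi>"
    and Uh_fd: "fin_dim_subspace Uh" and Vh_fd: "fin_dim_subspace Vh"
    and uh_in: "uh \<in> Uh"
    and primal_h: "\<And>v. v \<in> Vh \<Longrightarrow> blinfun_apply (A uh) v = 0"
    and zh_in: "zh \<in> Vh"
    and adjoint_h: "\<And>\<phi>. \<phi> \<in> Uh \<Longrightarrow>
        blinfun_apply (blinfun_apply (A1 uh) \<phi>) zh = blinfun_apply (J1 uh) \<phi>"
    and ut_in: "ut \<in> Uh" and zt_in: "zt \<in> Vh"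
    and b0: "0 < b0" "b0 < 1" and bh: "bh < b0"
    and sat: "\<bar>J u - J uh\<bar> < bh * \<bar>J u - J ut\<bar>"
  shows "(1 / (1 + bh)) * \<bar>eta2 A A1 A2 A3 J1 J3 ut zt uh zh\<bar> \<le> \<bar>J u - J ut\<bar>
       \<and> \<bar>J u - J ut\<bar> \<le> (1 / (1 - bh)) * \<bar>eta2 A A1 A2 A3 J1 J3 ut zt uh zh\<bar>
       \<and> (1 / (1 + b0)) * \<bar>eta2 A A1 A2 A3 J1 J3 ut zt uh zh\<bar> \<le> \<bar>J u - J ut\<bar>
       \<and> \<bar>J u - J ut\<bar> \<le> (1 / (1 - b0)) * \<bar>eta2 A A1 A2 A3 J1 J3 ut zt uh zh\<bar>"
proof -
  have "subspace Uh" "subspace Vh"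
    using Uh_fd Vh_fd by (simp_all add: fin_dim_subspace_def)
  then have eta: "eta2 A A1 A2 A3 J1 J3 ut zt uh zh = (J u - J ut) - (J u - J uh)"
    using eta2_eq_functional_difference[OF dA dA1 dA2 dJ dJ1 dJ2] uh_in ut_in zh_in zt_in
      primal_h adjoint_h
    by simp
  have "\<bar>J u - J uh\<bar> < b0 * \<bar>J u - J ut\<bar>"
    using sat bh mult_right_mono[of bh b0 "\<bar>J u - J ut\<bar>"] by simp
  from two_sided_bounds_from_saturation[OF sat] two_sided_bounds_from_saturation[OF this b0(2)]
  show ?thesis
    using bh b0 unfolding eta by simp
qed

end
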